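(* Consider the delay differential system \[ \begin{aligned} \dot T(t)&= s-dT(t)+aT(t)\Big(1-\frac{T(t)+I(t)}{T_{\max}}\Big)-\frac{bT(t)V(t)}{1+\alpha V(t)},\\ \dot I(t)&= \frac{bT(t-\tau)V(t-\tau)}{1+\alpha V(t-\tau)}+aI(t)\Big(1-\frac{T(t)+I(t)}{T_{\max}}\Big)-\mu I(t),\\ \dot V(t)&= pI(t)-cV(t), \end{aligned} \] with positive constants $s,d,a,T_{\max},b,\alpha,\mu,p,c$, $\tau\ge0$, and nonnegative continuous initial data on $[-\tau,0]$. Then every solution satisfies \[ \limsup_{t\to\infty}T(t)\le T_0=\frac{T_{\max}}{2a}\Big[a-d+\sqrt{(a-d)^2+\tfrac{4as}{T_{\max}}}\Big], \] and hence for every sufficiently small $\epsilon>0$ there is $t_1>0$ such that $T(t)\le T_0+\epsilon$ for $t>t_1$. *)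

theory Defs
  imports "HOL-Analysis.Analysis"
begin

definition T0_bound :: "real \<Rightarrow> real \<Rightarrow> real \<Rightarrow> real \<Rightarrow> real" where
  "T0_bound s d a Tmax = Tmax / (2 * a) * (a - d + sqrt ((a - d)^2 + 4 * a * s / Tmax))"

end

(*
  T stays nonnegative because T' = s > 0 wherever T = 0. I and V stay nonnegative: at the first
  time ts where one of them could turn negative, on a short interval [ts, ts + delta] the delayed
  incidence only involves V on [ts - tau, ts + delta], where 1 + alpha V >= 1/2, so both
  derivatives are bounded below by -K N, with N the largest negative excursion on the interval;
  as K delta < 1 the excursion -N can never be reached. With I, V >= 0 the T equation gives
  T' <= s - d T + a T (1 - T / Tmax) = -(a / Tmax) (T - T0) (T - T1) with T1 <= T0 the roots,
  which is at most -(a / Tmax) eps^2 once T >= T0 + eps; so T enters and never leaves the region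
  T <= T0 + eps.
*)

theory Submission
  imports Defs
begin

lemma last_level_crossing:
  fixes f :: "real \<Rightarrow> real"
  assumes "continuous_on {x..y} f" "f x \<ge> c" "f y < c" "x \<le> y"
  obtains t0 where "x \<le> t0" "t0 < y" "f t0 = c" "\<And>u. t0 < u \<Longrightarrow> u \<le> y \<Longrightarrow> f u < c"
proof -
  let ?Z = "{x..y} \<inter> f -` {c..}"
  have "closed ?Z" by (rule continuous_closed_preimage[OF assms(1)]) auto
  moreover have "?Z \<noteq> {}" using assms by auto
  moreover have "bdd_above ?Z" by (auto intro: bdd_aboveI[of _ y])
  ultimately have t0Z: "Sup ?Z \<in> ?Z" by (intro closed_contains_Sup)
  have after: "f u < c" if "Sup ?Z < u" "u \<le> y" for u
  proof (rule ccontr)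
    assume "\<not> f u < c"
    then have "u \<in> ?Z" using that t0Z by auto
    then show False using cSup_upper[OF _ \<open>bdd_above ?Z\<close>] that by fastforce
  qed
  have "Sup ?Z < y" using t0Z assms(3) by (cases "Sup ?Z = y") auto
  have "continuous_on {Sup ?Z..y} f" using t0Z by (intro continuous_on_subset[OF assms(1)]) auto
  then obtain z where "Sup ?Z \<le> z" "z \<le> y" "f z = c"
    using IVT2'[of f y c "Sup ?Z"] t0Z \<open>Sup ?Z < y\<close> assms(3) by auto
  then have "z = Sup ?Z" using after[of z] by fastforce
  with \<open>f z = c\<close> have "f (Sup ?Z) = c" by simp
  show thesis by (rule that[of "Sup ?Z"]) (use t0Z \<open>Sup ?Z < y\<close> \<open>f (Sup ?Z) = c\<close> after in auto)
qed

lemma mvt_real_derivative_within: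
  fixes f f' :: "real \<Rightarrow> real"
  assumes "x < y" "{x..y} \<subseteq> S" "\<And>u. u \<in> {x..y} \<Longrightarrow> (f has_real_derivative f' u) (at u within S)"
  shows "\<exists>\<xi>\<in>{x<..<y}. f y - f x = f' \<xi> * (y - x)"
proof -
  have "\<exists>\<xi>\<in>{x<..<y}. f y - f x = (\<lambda>h. f' \<xi> * h) (y - x)"
  proof (rule mvt_simple[OF assms(1)])
    fix u assume "x \<le> u" "u \<le> y"
    then have "(f has_real_derivative f' u) (at u within {x..y})"
      by (intro has_field_derivative_subset[OF assms(3)]) (use assms(2) in auto)
    then show "(f has_derivative (\<lambda>h. f' u * h)) (at u within {x..y})"
      by (simp add: has_field_derivative_def)
  qed
  then show ?thesis by simp
qed

lemma lower_bound_if_derivative_bounded_where_neg: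
  fixes g D :: "real \<Rightarrow> real"
  assumes "t0 \<le> t" "{t0..t} \<subseteq> S"
    and der: "\<And>u. u \<in> {t0..t} \<Longrightarrow> (g has_real_derivative D u) (at u within S)"
    and "g t0 \<ge> 0" "L \<ge> 0"
    and rate: "\<And>u. u \<in> {t0<..t} \<Longrightarrow> g u < 0 \<Longrightarrow> D u \<ge> -L"
  shows "g t \<ge> -L * (t - t0)"
proof (cases "g t \<ge> 0")
  case True
  moreover have "L * (t - t0) \<ge> 0" using assms by simp
  ultimately show ?thesis by linarith
next
  case False
  have "continuous_on {t0..t} g"
    by (intro DERIV_continuous_on[where D=D] has_field_derivative_subset[OF der]) (use assms(2) in auto)
  moreover have "g t < 0" using False by simp
  ultimately obtain t' where t': "t0 \<le> t'" "t' < t" "g t' = 0" "\<And>u. t' < u \<Longrightarrow> u \<le> t \<Longrightarrow> g u < 0"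
    using last_level_crossing \<open>g t0 \<ge> 0\<close> \<open>t0 \<le> t\<close> by blast
  have "{t'..t} \<subseteq> S" "\<And>u. u \<in> {t'..t} \<Longrightarrow> (g has_real_derivative D u) (at u within S)"
    using t' assms(2) der by auto
  then obtain \<xi> where \<xi>: "\<xi> \<in> {t'<..<t}" "g t - g t' = D \<xi> * (t - t')"
    using mvt_real_derivative_within[OF \<open>t' < t\<close>] by blast
  have "D \<xi> \<ge> -L" using rate t' \<xi> by auto
  then have "D \<xi> * (t - t') \<ge> -L * (t - t')" using t' by (intro mult_right_mono) auto
  moreover have "-L * (t - t') \<ge> -L * (t - t0)" using t' \<open>L \<ge> 0\<close> by (intro mult_left_mono_neg) auto
  ultimately show ?thesis using \<xi> t' by linarith
qed

lemma nonneg_if_pos_derivative_at_zeros: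
  fixes f D :: "real \<Rightarrow> real"
  assumes "f t0 \<ge> 0"
    and der: "\<And>t. t \<ge> t0 \<Longrightarrow> (f has_real_derivative D t) (at t within {t0..})"
    and pos: "\<And>t. t \<ge> t0 \<Longrightarrow> f t = 0 \<Longrightarrow> D t > 0"
    and "t \<ge> t0"
  shows "f t \<ge> 0"
proof (rule ccontr)
  assume "\<not> f t \<ge> 0"
  moreover have "continuous_on {t0..t} f"
    by (intro DERIV_continuous_on[where D=D] has_field_derivative_subset[OF der]) auto
  ultimately obtain t' where t': "t0 \<le> t'" "t' < t" "f t' = 0" "\<And>u. t' < u \<Longrightarrow> u \<le> t \<Longrightarrow> f u < 0"
    using last_level_crossing \<open>f t0 \<ge> 0\<close> \<open>t \<ge> t0\<close> by (metis not_le)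
  then obtain e where e: "e > 0" "\<And>h. h > 0 \<Longrightarrow> h < e \<Longrightarrow> f t' < f (t' + h)"
    using has_real_derivative_pos_inc_right[OF der[OF \<open>t0 \<le> t'\<close>] pos[OF \<open>t0 \<le> t'\<close> \<open>f t' = 0\<close>]]
    by (metis add_increasing2 atLeast_iff less_imp_le)
  define h where "h = min (e / 2) (t - t')"
  have "f t' < f (t' + h)" "f (t' + h) < 0" using e t' by (auto simp: h_def)
  then show False using t' by simp
qed

lemma eventually_le_if_derivative_le_neg:
  fixes f D :: "real \<Rightarrow> real"
  assumes der: "\<And>t. t \<ge> t0 \<Longrightarrow> (f has_real_derivative D t) (at t within {t0..})"
    and "\<eta> > 0"
    and dec: "\<And>t. t \<ge> t0 \<Longrightarrow> f t \<ge> c \<Longrightarrow> D t \<le> -\<eta>"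
  shows "eventually (\<lambda>t. f t \<le> c) at_top"
proof -
  have "\<exists>t1\<ge>t0. f t1 \<le> c"
  proof (rule ccontr)
    assume "\<not> (\<exists>t1\<ge>t0. f t1 \<le> c)"
    then have above: "f u > c" if "u \<ge> t0" for u using that by force
    define K where "K = (\<bar>f t0 - c\<bar> + 1) / \<eta>"
    have "K > 0" using \<open>\<eta> > 0\<close> by (simp add: K_def add_pos_nonneg)
    then obtain \<xi> where \<xi>: "\<xi> \<in> {t0<..<t0 + K}" "f (t0 + K) - f t0 = D \<xi> * K"
      using mvt_real_derivative_within[of t0 "t0 + K" "{t0..}" f D] der by auto
    have "D \<xi> * K \<le> -\<eta> * K"
      using dec[of \<xi>] above[of \<xi>] \<xi> \<open>K > 0\<close> by (intro mult_right_mono) auto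
    also have "-\<eta> * K = -(\<bar>f t0 - c\<bar> + 1)" using \<open>\<eta> > 0\<close> by (simp add: K_def)
    finally show False using \<xi> above[of "t0 + K"] \<open>K > 0\<close> by auto
  qed
  then obtain t1 where t1: "t1 \<ge> t0" "f t1 \<le> c" by blast
  have "c - f t \<ge> -0 * (t - t1)" if "t \<ge> t1" for t
  proof (rule lower_bound_if_derivative_bounded_where_neg[of t1 t "{t0..}" _ "\<lambda>u. - D u"])
    show "((\<lambda>u. c - f u) has_real_derivative - D u) (at u within {t0..})" if "u \<in> {t1..t}" for u
      using that t1 der[of u] by (auto intro!: derivative_eq_intros)
    show "- D u \<ge> -0" if "u \<in> {t1<..t}" "c - f u < 0" for u
      using that t1 dec[of u] \<open>\<eta> > 0\<close> by auto
  qed (use that t1 in auto)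
  then show ?thesis unfolding eventually_at_top_linorder by auto
qed

lemma first_negative_time:
  fixes \<phi> :: "real \<Rightarrow> real"
  assumes cont: "continuous_on {t0..} \<phi>" and "\<phi> t0 \<ge> 0" and "\<exists>t\<ge>t0. \<phi> t < 0"
  obtains ts where "ts \<ge> t0" "\<And>u. u \<in> {t0..ts} \<Longrightarrow> \<phi> u \<ge> 0"
    "\<And>\<delta>. \<delta> > 0 \<Longrightarrow> \<exists>u\<in>{ts<..<ts + \<delta>}. \<phi> u < 0"
proof -
  define S where "S = {t. t0 \<le> t \<and> \<phi> t < 0}"
  have S: "S \<noteq> {}" "bdd_below S" using assms(3) by (auto simp: S_def intro: bdd_belowI[of _ t0])
  define ts where "ts = Inf S"
  have "ts \<ge> t0" unfolding ts_def using S by (intro cInf_greatest) (auto simp: S_def)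
  have before: "\<phi> u \<ge> 0" if "t0 \<le> u" "u < ts" for u
    using that cInf_lower[OF _ S(2), of u] by (force simp: S_def ts_def)
  have at_ts: "\<phi> ts \<ge> 0"
  proof (cases "ts = t0")
    case False
    let ?A = "{t0..ts} \<inter> \<phi> -` {0..}"
    have "closed ?A" by (rule continuous_closed_preimage) (auto intro: continuous_on_subset[OF cont])
    moreover have "{t0..<ts} \<subseteq> ?A" using before by auto
    ultimately have "closure {t0..<ts} \<subseteq> ?A" by (rule closure_minimal[rotated])
    then show ?thesis using False \<open>ts \<ge> t0\<close> by auto
  qed (use assms in simp)
  have "\<exists>u\<in>{ts<..<ts + \<delta>}. \<phi> u < 0" if "\<delta> > 0" for \<delta>
  proof -
    have "Inf S < ts + \<delta>" using that by (simp add: ts_def)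
    then obtain u where "u \<in> S" "u < ts + \<delta>" by (auto simp: cInf_less_iff[OF S])
    moreover have "ts \<le> u" using \<open>u \<in> S\<close> cInf_lower[OF _ S(2)] by (simp add: ts_def)
    moreover have "\<phi> u < 0" using \<open>u \<in> S\<close> by (simp add: S_def)
    moreover have "u \<noteq> ts" using calculation at_ts by auto
    ultimately show ?thesis by auto
  qed
  then show thesis using that \<open>ts \<ge> t0\<close> before at_ts by (metis atLeastAtMost_iff le_less)
qed

text \<open>A Gronwall-type argument: with \<open>N\<close> the largest negative excursion of \<open>g\<close> and \<open>h\<close>
  on the interval, the rate bound only lets them reach \<open>-K N \<delta> > -N\<close>.\<close>

lemma nonneg_on_short_interval:
  fixes g h Dg Dh :: "real \<Rightarrow> real"
  assumes "{t0..t0 + \<delta>} \<subseteq> S" "K \<ge> 0" "K * \<delta> < 1"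
    and der_g: "\<And>u. u \<in> {t0..t0 + \<delta>} \<Longrightarrow> (g has_real_derivative Dg u) (at u within S)"
    and der_h: "\<And>u. u \<in> {t0..t0 + \<delta>} \<Longrightarrow> (h has_real_derivative Dh u) (at u within S)"
    and "g t0 \<ge> 0" "h t0 \<ge> 0"
    and rate: "\<And>N u. N > 0 \<Longrightarrow> (\<And>v. v \<in> {t0..t0 + \<delta>} \<Longrightarrow> -N \<le> g v \<and> -N \<le> h v) \<Longrightarrow>
      u \<in> {t0<..t0 + \<delta>} \<Longrightarrow> (g u < 0 \<longrightarrow> -K * N \<le> Dg u) \<and> (h u < 0 \<longrightarrow> -K * N \<le> Dh u)"
    and u: "u \<in> {t0..t0 + \<delta>}"
  shows "0 \<le> g u \<and> 0 \<le> h u"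
proof -
  define \<phi> where "\<phi> v = max (- g v) (- h v)" for v
  have "continuous_on {t0..t0 + \<delta>} g"
    by (intro DERIV_continuous_on[where D=Dg] has_field_derivative_subset[OF der_g]) (use assms(1) in auto)
  moreover have "continuous_on {t0..t0 + \<delta>} h"
    by (intro DERIV_continuous_on[where D=Dh] has_field_derivative_subset[OF der_h]) (use assms(1) in auto)
  ultimately have "continuous_on {t0..t0 + \<delta>} \<phi>" unfolding \<phi>_def by (intro continuous_intros)
  then obtain t1 where t1: "t1 \<in> {t0..t0 + \<delta>}" and max: "\<And>v. v \<in> {t0..t0 + \<delta>} \<Longrightarrow> \<phi> v \<le> \<phi> t1"
    using continuous_attains_sup[of "{t0..t0 + \<delta>}" \<phi>] u by auto
  define N where "N = \<phi> t1"
  have bound: "-N \<le> g v \<and> -N \<le> h v" if "v \<in> {t0..t0 + \<delta>}" for v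
    using max[OF that] by (simp add: N_def \<phi>_def)
  show ?thesis
  proof (rule ccontr)
    assume "\<not> ?thesis"
    then have "N > 0" using bound[OF u] by linarith
    have rate': "(g v < 0 \<longrightarrow> -K * N \<le> Dg v) \<and> (h v < 0 \<longrightarrow> -K * N \<le> Dh v)" if "v \<in> {t0<..t1}" for v
      using rate[OF \<open>N > 0\<close> bound] that t1 by auto
    have sub: "{t0..t1} \<subseteq> S" using assms(1) t1 by auto
    have "g t1 \<ge> -(K * N) * (t1 - t0)" "h t1 \<ge> -(K * N) * (t1 - t0)"
      using lower_bound_if_derivative_bounded_where_neg[OF _ sub, of g Dg "K * N"]
        lower_bound_if_derivative_bounded_where_neg[OF _ sub, of h Dh "K * N"]
        t1 der_g der_h rate' assms \<open>N > 0\<close> by auto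
    moreover have "(K * N) * (t1 - t0) < N"
    proof -
      have "(K * N) * (t1 - t0) \<le> (K * \<delta>) * N"
        using t1 \<open>K \<ge> 0\<close> \<open>N > 0\<close> by (simp add: mult_left_mono mult.commute mult.left_commute)
      also have "\<dots> < N" using \<open>K * \<delta> < 1\<close> \<open>N > 0\<close> by simp
      finally show ?thesis .
    qed
    moreover have "N = - g t1 \<or> N = - h t1" by (auto simp: N_def \<phi>_def max_def)
    ultimately show False by (simp only: mult_minus_left) linarith
  qed
qed

lemma logistic_rate_above_T0_bound:
  fixes s d a Tmax \<epsilon> x :: real
  assumes "a > 0" "Tmax > 0" "s > 0" "\<epsilon> > 0" "x \<ge> T0_bound s d a Tmax + \<epsilon>"
  shows "s - d * x + a * x * (1 - x / Tmax) \<le> -(a / Tmax) * \<epsilon>^2"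
proof -
  define r where "r = sqrt ((a - d)^2 + 4 * a * s / Tmax)"
  have r2: "r^2 = (a - d)^2 + 4 * a * s / Tmax" and "r \<ge> 0"
    using assms by (simp_all add: r_def)
  define x0 where "x0 = Tmax / (2 * a) * (a - d + r)"
  define x1 where "x1 = Tmax / (2 * a) * (a - d - r)"
  have sum: "x0 + x1 = Tmax * (a - d) / a" using assms by (simp add: x0_def x1_def field_simps)
  have vieta: "(a - d + r) * (a - d - r) = (a - d)^2 - r^2" by (simp add: power2_eq_square algebra_simps)
  have "x0 * x1 = (Tmax / (2 * a))^2 * ((a - d + r) * (a - d - r))"
    by (simp add: x0_def x1_def power2_eq_square mult_ac)
  also have "\<dots> = - s * Tmax / a" using assms by (simp add: vieta r2) (simp add: field_simps power2_eq_square)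
  finally have prod: "x0 * x1 = - s * Tmax / a" .
  have "(x - x0) * (x - x1) = x^2 - (x0 + x1) * x + x0 * x1" by (simp add: algebra_simps power2_eq_square)
  then have expand: "(x - x0) * (x - x1) = x^2 - Tmax * (a - d) / a * x - s * Tmax / a"
    unfolding sum prod by simp
  have factor: "s - d * x + a * x * (1 - x / Tmax) = -(a / Tmax) * ((x - x0) * (x - x1))"
    unfolding expand using assms by (simp add: field_simps power2_eq_square)
  have "x1 \<le> x0" using assms \<open>r \<ge> 0\<close> unfolding x0_def x1_def by (intro mult_left_mono) auto
  moreover have "x0 = T0_bound s d a Tmax" by (simp add: T0_bound_def x0_def r_def)
  ultimately have "\<epsilon> * \<epsilon> \<le> (x - x0) * (x - x1)" using assms by (intro mult_mono) auto
  then have "(a / Tmax) * \<epsilon>^2 \<le> (a / Tmax) * ((x - x0) * (x - x1))"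
    unfolding power2_eq_square by (rule mult_left_mono) (use assms in auto)
  then show ?thesis unfolding factor by simp
qed

lemma saturated_incidence_ge:
  fixes b \<alpha> x v :: real
  assumes "b \<ge> 0" "\<alpha> > 0" "x \<ge> 0" "-1 / (2 * \<alpha>) < v" "v \<le> 0"
  shows "2 * b * x * v \<le> b * x * v / (1 + \<alpha> * v)"
proof -
  have q: "1 / 2 < 1 + \<alpha> * v" using assms by (simp add: field_simps)
  have "v * (1 - 2 * (1 + \<alpha> * v)) \<ge> 0" using q assms by (intro mult_nonpos_nonpos) auto
  then have "2 * v \<le> v / (1 + \<alpha> * v)" using q by (simp add: field_simps)
  then have "b * x * (2 * v) \<le> b * x * (v / (1 + \<alpha> * v))" using assms by (intro mult_left_mono) auto
  then show ?thesis by simp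
qed

locale delayed_infection_model =
  fixes s d a Tmax b \<alpha> \<mu> p c \<tau> :: real
    and T I V :: "real \<Rightarrow> real"
  assumes pos: "s > 0" "d > 0" "a > 0" "Tmax > 0" "b > 0" "\<alpha> > 0" "\<mu> > 0" "p > 0" "c > 0"
    and tau: "\<tau> \<ge> 0"
    and cont: "continuous_on {-\<tau>..} T" "continuous_on {-\<tau>..} I" "continuous_on {-\<tau>..} V"
    and init_nonneg: "\<And>t. t \<in> {-\<tau>..0} \<Longrightarrow> T t \<ge> 0 \<and> I t \<ge> 0 \<and> V t \<ge> 0"
    and eqT: "\<And>t. t \<ge> 0 \<Longrightarrow> (T has_real_derivative
        (s - d * T t + a * T t * (1 - (T t + I t) / Tmax) - b * T t * V t / (1 + \<alpha> * V t)))
        (at t within {0..})"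
    and eqI: "\<And>t. t \<ge> 0 \<Longrightarrow> (I has_real_derivative
        (b * T (t - \<tau>) * V (t - \<tau>) / (1 + \<alpha> * V (t - \<tau>))
         + a * I t * (1 - (T t + I t) / Tmax) - \<mu> * I t))
        (at t within {0..})"
    and eqV: "\<And>t. t \<ge> 0 \<Longrightarrow> (V has_real_derivative (p * I t - c * V t)) (at t within {0..})"
begin

lemma T_nonneg:
  assumes "t \<ge> -\<tau>"
  shows "T t \<ge> 0"
proof (cases "t < 0")
  case True
  then show ?thesis using init_nonneg assms by auto
next
  case False
  show ?thesis
    by (rule nonneg_if_pos_derivative_at_zeros[OF _ eqT]) (use init_nonneg tau pos False in auto)
qed

lemma delayed_incidence_ge:
  assumes "0 \<le> ts" "ts \<le> u" "B \<ge> 0" "N \<ge> 0"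
    and before: "\<And>w. w \<in> {-\<tau>..ts} \<Longrightarrow> V w \<ge> 0"
    and after: "\<And>w. w \<in> {ts<..u} \<Longrightarrow> T w \<le> B \<and> -N \<le> V w \<and> -1 / (2 * \<alpha>) < V w"
  shows "-2 * b * B * N \<le> b * T (u - \<tau>) * V (u - \<tau>) / (1 + \<alpha> * V (u - \<tau>))"
proof -
  define w where "w = u - \<tau>"
  have "T w \<ge> 0" using T_nonneg assms by (simp add: w_def)
  show ?thesis
  proof (cases "V w \<ge> 0")
    case True
    then have "b * T w * V w / (1 + \<alpha> * V w) \<ge> 0"
      using \<open>T w \<ge> 0\<close> pos by (intro divide_nonneg_pos mult_nonneg_nonneg) (auto intro: add_pos_nonneg)
    moreover have "-2 * b * B * N \<le> 0" using pos assms by (intro mult_nonpos_nonneg) auto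
    ultimately show ?thesis unfolding w_def by (meson order_trans)
  next
    case False
    then have "w \<in> {ts<..u}" using before[of w] assms tau by (force simp: w_def)
    then have w: "T w \<le> B" "-N \<le> V w" "-1 / (2 * \<alpha>) < V w" using after by auto
    have "-2 * b * B * N \<le> 2 * b * B * V w"
      using mult_left_mono[OF \<open>-N \<le> V w\<close>, of "2 * b * B"] pos \<open>B \<ge> 0\<close> by simp
    also have "\<dots> \<le> 2 * b * T w * V w"
      using w False pos \<open>T w \<ge> 0\<close> by (simp add: mult_right_mono_neg mult_left_mono)
    also have "\<dots> \<le> b * T w * V w / (1 + \<alpha> * V w)"
      using w False pos \<open>T w \<ge> 0\<close> by (intro saturated_incidence_ge) auto
    finally show ?thesis by (simp add: w_def)
  qed
qed

lemma I_rate_ge: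
  assumes "0 \<le> ts" "ts < u" "N > 0"
    and before: "\<And>w. w \<in> {-\<tau>..ts} \<Longrightarrow> V w \<ge> 0"
    and after: "\<And>w. w \<in> {ts<..u} \<Longrightarrow> T w \<le> B \<and> -N \<le> V w \<and> -1 / (2 * \<alpha>) < V w"
    and B: "\<bar>T u\<bar> + \<bar>I u\<bar> \<le> B" and "-N \<le> I u" "I u < 0"
  shows "-(2 * b * B + a * (1 + B / Tmax) + \<mu>) * N \<le> b * T (u - \<tau>) * V (u - \<tau>) / (1 + \<alpha> * V (u - \<tau>))
    + a * I u * (1 - (T u + I u) / Tmax) - \<mu> * I u"
proof -
  define M where "M = a * (1 + B / Tmax) + \<mu>"
  have "\<bar>(T u + I u) / Tmax\<bar> \<le> B / Tmax" using B pos by (simp add: abs_divide divide_right_mono)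
  then have "\<bar>1 - (T u + I u) / Tmax\<bar> \<le> 1 + B / Tmax" by linarith
  then have "\<bar>a * (1 - (T u + I u) / Tmax)\<bar> \<le> a * (1 + B / Tmax)"
    using pos by (simp add: abs_mult mult_left_mono)
  then have "\<bar>a * (1 - (T u + I u) / Tmax) - \<mu>\<bar> \<le> M" using pos by (simp add: M_def)
  moreover have "\<bar>I u\<bar> \<le> N" using assms by auto
  ultimately have "\<bar>I u * (a * (1 - (T u + I u) / Tmax) - \<mu>)\<bar> \<le> N * M"
    unfolding abs_mult by (intro mult_mono) auto
  then have "-(N * M) \<le> a * I u * (1 - (T u + I u) / Tmax) - \<mu> * I u"
    by (auto dest: abs_le_D2 simp: algebra_simps)
  moreover have "-2 * b * B * N \<le> b * T (u - \<tau>) * V (u - \<tau>) / (1 + \<alpha> * V (u - \<tau>))"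
    using B assms by (intro delayed_incidence_ge) auto
  moreover have "-(2 * b * B + a * (1 + B / Tmax) + \<mu>) * N = -2 * b * B * N - N * M"
    by (simp add: M_def algebra_simps)
  ultimately show ?thesis by linarith
qed

lemma V_above_near:
  assumes "ts \<ge> 0" "V ts \<ge> 0" "e > 0"
  obtains \<delta> where "\<delta> > 0" "\<And>u. u \<in> {ts..<ts + \<delta>} \<Longrightarrow> -e < V u"
proof -
  have "ts \<in> {-\<tau>..}" using tau assms by auto
  then obtain \<delta> where "\<delta> > 0" and near: "\<And>u. u \<in> {-\<tau>..} \<Longrightarrow> dist u ts < \<delta> \<Longrightarrow> dist (V u) (V ts) < e"
    using cont(3) \<open>e > 0\<close> unfolding continuous_on_iff by metis
  have "-e < V u" if "u \<in> {ts..<ts + \<delta>}" for u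
    using near[of u] that tau assms by (auto simp: dist_real_def)
  then show thesis using that \<open>\<delta> > 0\<close> by blast
qed

lemma TI_bounded_near:
  assumes "ts \<ge> 0"
  obtains B where "B \<ge> 0" "\<And>u. u \<in> {ts..ts + 1} \<Longrightarrow> \<bar>T u\<bar> + \<bar>I u\<bar> \<le> B"
proof -
  have sub: "{ts..ts + 1} \<subseteq> {-\<tau>..}" using tau assms by auto
  have "bounded ((\<lambda>u. \<bar>T u\<bar> + \<bar>I u\<bar>) ` {ts..ts + 1})"
    by (intro compact_imp_bounded compact_continuous_image continuous_intros
        continuous_on_subset[OF cont(1) sub] continuous_on_subset[OF cont(2) sub]) auto
  then obtain B where "\<forall>x\<in>(\<lambda>u. \<bar>T u\<bar> + \<bar>I u\<bar>) ` {ts..ts + 1}. \<bar>x\<bar> \<le> B"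
    unfolding bounded_real by blast
  then have B: "\<And>u. u \<in> {ts..ts + 1} \<Longrightarrow> \<bar>T u\<bar> + \<bar>I u\<bar> \<le> B" by force
  moreover have "B \<ge> 0" using B[of ts] by auto
  ultimately show thesis using that by blast
qed

lemma IV_nonneg_after:
  assumes "ts \<ge> 0" and upto: "\<And>u. u \<in> {-\<tau>..ts} \<Longrightarrow> I u \<ge> 0 \<and> V u \<ge> 0"
  obtains \<delta> where "\<delta> > 0" "\<And>u. u \<in> {ts..ts + \<delta>} \<Longrightarrow> I u \<ge> 0 \<and> V u \<ge> 0"
proof -
  obtain B where "B \<ge> 0" and B: "\<And>u. u \<in> {ts..ts + 1} \<Longrightarrow> \<bar>T u\<bar> + \<bar>I u\<bar> \<le> B"
    using TI_bounded_near \<open>ts \<ge> 0\<close> by blast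
  obtain \<delta>1 where "\<delta>1 > 0" and Vlow: "\<And>u. u \<in> {ts..<ts + \<delta>1} \<Longrightarrow> -1 / (2 * \<alpha>) < V u"
    using V_above_near[OF \<open>ts \<ge> 0\<close>, of "1 / (2 * \<alpha>)"] upto[of ts] tau \<open>ts \<ge> 0\<close> pos by auto
  define K where "K = 2 * b * B + a * (1 + B / Tmax) + \<mu> + p"
  define \<delta> where "\<delta> = min (min 1 (\<delta>1 / 2)) (1 / (2 * K))"
  have "K > 0" using pos \<open>B \<ge> 0\<close> by (simp add: K_def add_nonneg_pos add_pos_nonneg)
  then have "\<delta> > 0" "\<delta> \<le> 1" "\<delta> < \<delta>1" using \<open>\<delta>1 > 0\<close> by (auto simp: \<delta>_def)
  have "K * \<delta> \<le> K * (1 / (2 * K))" using \<open>K > 0\<close> by (intro mult_left_mono) (auto simp: \<delta>_def)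
  then have "K * \<delta> < 1" using \<open>K > 0\<close> by simp
  have "I u \<ge> 0 \<and> V u \<ge> 0" if u: "u \<in> {ts..ts + \<delta>}" for u
  proof (rule nonneg_on_short_interval[where S = "{0..}" and K = K and g = I and h = V
        and Dg = "\<lambda>u. b * T (u - \<tau>) * V (u - \<tau>) / (1 + \<alpha> * V (u - \<tau>))
          + a * I u * (1 - (T u + I u) / Tmax) - \<mu> * I u"
        and Dh = "\<lambda>u. p * I u - c * V u"])
    fix N u
    assume "N > 0" and bound: "\<And>v. v \<in> {ts..ts + \<delta>} \<Longrightarrow> -N \<le> I v \<and> -N \<le> V v"
      and u: "u \<in> {ts<..ts + \<delta>}"
    have "(2 * b * B + a * (1 + B / Tmax) + \<mu>) * N \<le> K * N" "p * N \<le> K * N"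
      using \<open>N > 0\<close> pos \<open>B \<ge> 0\<close> by (simp_all add: K_def algebra_simps)
    then have KN: "-K * N \<le> -(2 * b * B + a * (1 + B / Tmax) + \<mu>) * N" "-K * N \<le> -(p * N)"
      by (simp_all only: mult_minus_left neg_le_iff_le)
    show "(I u < 0 \<longrightarrow> -K * N \<le> b * T (u - \<tau>) * V (u - \<tau>) / (1 + \<alpha> * V (u - \<tau>))
         + a * I u * (1 - (T u + I u) / Tmax) - \<mu> * I u) \<and> (V u < 0 \<longrightarrow> -K * N \<le> p * I u - c * V u)"
    proof (intro conjI impI)
      assume "I u < 0"
      have "-(2 * b * B + a * (1 + B / Tmax) + \<mu>) * N \<le> b * T (u - \<tau>) * V (u - \<tau>) / (1 + \<alpha> * V (u - \<tau>))
        + a * I u * (1 - (T u + I u) / Tmax) - \<mu> * I u"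
      proof (rule I_rate_ge[OF \<open>ts \<ge> 0\<close> _ \<open>N > 0\<close>])
        show "T w \<le> B \<and> -N \<le> V w \<and> -1 / (2 * \<alpha>) < V w" if "w \<in> {ts<..u}" for w
          using B[of w] bound[of w] Vlow[of w] that u \<open>\<delta> \<le> 1\<close> \<open>\<delta> < \<delta>1\<close> by auto
      qed (use upto B[of u] bound[of u] u \<open>\<delta> \<le> 1\<close> \<open>I u < 0\<close> in auto)
      with KN(1) show "-K * N \<le> b * T (u - \<tau>) * V (u - \<tau>) / (1 + \<alpha> * V (u - \<tau>))
        + a * I u * (1 - (T u + I u) / Tmax) - \<mu> * I u" by (rule order_trans)
    next
      assume "V u < 0"
      then have "c * V u < 0" using pos by (simp add: mult_pos_neg)
      moreover have "-(p * N) \<le> p * I u" using mult_left_mono[of "-N" "I u" p] bound[of u] u pos by simp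
      ultimately show "-K * N \<le> p * I u - c * V u" using KN(2) by linarith
    qed
  qed (use eqI eqV upto[of ts] tau \<open>ts \<ge> 0\<close> \<open>K > 0\<close> \<open>K * \<delta> < 1\<close> u in auto)
  then show thesis using that \<open>\<delta> > 0\<close> by blast
qed

lemma IV_nonneg:
  assumes "t \<ge> -\<tau>"
  shows "I t \<ge> 0 \<and> V t \<ge> 0"
proof (rule ccontr)
  assume bad: "\<not> ?thesis"
  have "continuous_on {0..} (\<lambda>u. min (I u) (V u))"
    using tau by (intro continuous_intros continuous_on_subset[OF cont(2)] continuous_on_subset[OF cont(3)]) auto
  moreover have "min (I 0) (V 0) \<ge> 0" using init_nonneg tau by auto
  moreover have "\<exists>t\<ge>0. min (I t) (V t) < 0"
    using bad init_nonneg[of t] assms by (cases "t < 0") (auto intro!: exI[of _ t])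
  ultimately obtain ts where ts: "ts \<ge> 0" "\<And>u. u \<in> {0..ts} \<Longrightarrow> min (I u) (V u) \<ge> 0"
    "\<And>\<delta>. \<delta> > 0 \<Longrightarrow> \<exists>u\<in>{ts<..<ts + \<delta>}. min (I u) (V u) < 0"
    by (rule first_negative_time) blast+
  have "I u \<ge> 0 \<and> V u \<ge> 0" if "u \<in> {-\<tau>..ts}" for u
    using that ts(2)[of u] init_nonneg[of u] by (cases "u < 0") auto
  then obtain \<delta> where "\<delta> > 0" and nonneg: "\<And>u. u \<in> {ts..ts + \<delta>} \<Longrightarrow> I u \<ge> 0 \<and> V u \<ge> 0"
    using IV_nonneg_after[OF ts(1)] by blast
  obtain u where "u \<in> {ts<..<ts + \<delta>}" "min (I u) (V u) < 0" using ts(3)[OF \<open>\<delta> > 0\<close>] by blast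
  with nonneg[of u] show False by auto
qed

lemma T_rate_le:
  assumes "t \<ge> 0" "\<epsilon> > 0" "T t \<ge> T0_bound s d a Tmax + \<epsilon>"
  shows "s - d * T t + a * T t * (1 - (T t + I t) / Tmax) - b * T t * V t / (1 + \<alpha> * V t)
    \<le> -(a / Tmax * \<epsilon>^2)"
proof -
  have "T t \<ge> 0" "I t \<ge> 0" "V t \<ge> 0" using T_nonneg IV_nonneg tau assms by auto
  then have "a * T t * (1 - (T t + I t) / Tmax) \<le> a * T t * (1 - T t / Tmax)"
    and "b * T t * V t / (1 + \<alpha> * V t) \<ge> 0"
    using pos by (auto intro!: mult_left_mono divide_right_mono)
  moreover have "s - d * T t + a * T t * (1 - T t / Tmax) \<le> -(a / Tmax) * \<epsilon>^2"
    using logistic_rate_above_T0_bound pos assms by blast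
  ultimately show ?thesis by simp
qed

lemma eventually_T_le:
  assumes "\<epsilon> > 0"
  shows "eventually (\<lambda>t. T t \<le> T0_bound s d a Tmax + \<epsilon>) at_top"
  by (rule eventually_le_if_derivative_le_neg[of 0 T _ "a / Tmax * \<epsilon>^2", OF eqT]) (use T_rate_le assms pos in auto)

end

theorem lemma3:
  fixes s d a Tmax b \<alpha> \<mu> p c \<tau> :: real
    and T I V :: "real \<Rightarrow> real"
  assumes pos: "s > 0" "d > 0" "a > 0" "Tmax > 0" "b > 0" "\<alpha> > 0" "\<mu> > 0" "p > 0" "c > 0"
    and tau: "\<tau> \<ge> 0"
    and cont: "continuous_on {-\<tau>..} T" "continuous_on {-\<tau>..} I" "continuous_on {-\<tau>..} V"
    and init_nonneg: "\<And>t. t \<in> {-\<tau>..0} \<Longrightarrow> T t \<ge> 0 \<and> I t \<ge> 0 \<and> V t \<ge> 0"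
    and eqT: "\<And>t. t \<ge> 0 \<Longrightarrow> (T has_real_derivative
        (s - d * T t + a * T t * (1 - (T t + I t) / Tmax) - b * T t * V t / (1 + \<alpha> * V t)))
        (at t within {0..})"
    and eqI: "\<And>t. t \<ge> 0 \<Longrightarrow> (I has_real_derivative
        (b * T (t - \<tau>) * V (t - \<tau>) / (1 + \<alpha> * V (t - \<tau>))
         + a * I t * (1 - (T t + I t) / Tmax) - \<mu> * I t))
        (at t within {0..})"
    and eqV: "\<And>t. t \<ge> 0 \<Longrightarrow> (V has_real_derivative (p * I t - c * V t)) (at t within {0..})"
  shows "Limsup at_top (\<lambda>t. ereal (T t)) \<le> ereal (T0_bound s d a Tmax)
         \<and> (\<forall>\<epsilon>>0. \<exists>t1>0. \<forall>t>t1. T t \<le> T0_bound s d a Tmax + \<epsilon>)"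
proof -
  interpret delayed_infection_model s d a Tmax b \<alpha> \<mu> p c \<tau> T I V
    using assms by unfold_locales auto
  have "Limsup at_top (\<lambda>t. ereal (T t)) \<le> ereal (T0_bound s d a Tmax)"
  proof (rule ereal_le_epsilon2)
    fix \<epsilon> :: real assume "\<epsilon> > 0"
    show "Limsup at_top (\<lambda>t. ereal (T t)) \<le> ereal (T0_bound s d a Tmax) + ereal \<epsilon>"
      by (rule Limsup_bounded) (use eventually_T_le[OF \<open>\<epsilon> > 0\<close>] in \<open>auto elim: eventually_mono\<close>)
  qed
  moreover have "\<exists>t1>0. \<forall>t>t1. T t \<le> T0_bound s d a Tmax + \<epsilon>" if \<epsilon>: "\<epsilon> > 0" for \<epsilon>
  proof -
    obtain t1 where "\<And>t. t \<ge> t1 \<Longrightarrow> T t \<le> T0_bound s d a Tmax + \<epsilon>"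
      using eventually_T_le[OF \<epsilon>] by (auto simp: eventually_at_top_linorder)
    then show ?thesis by (intro exI[of _ "max 1 t1"]) auto
  qed
  ultimately show ?thesis by blast
qed

end
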